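(* Let $n\in\mathbb{N}$, $\omega=\omega_n=\frac{n^2}{4}$, and $c>0$ such that $\frac{n^2+c^2}{2c}\notin\mathbb{Z}'$, where $\mathbb{Z}'$ is the set of even integers if $n$ is even and of odd integers if $n$ is odd. Consider the linear system of uncoupled ODEs $$\psi_m''(y)+i(m-c)\psi_m'(y)+\left(\omega-\frac{m^2}{4}\right)\psi_m(y)=0,\qquad m\in\mathbb{Z}',$$ whose solutions are spanned by $\psi_{m'}(y)=e^{\kappa y}\delta_{m,m'}$, where $\kappa$ is a root of $\kappa^2+i(m-c)\kappa+\omega-\frac{m^2}{4}=0$, i.e. $$\kappa=\kappa_m^{\pm}=\frac{i(c-m)\pm\sqrt{2cm-n^2-c^2}}{2},\qquad m\in\mathbb{Z}'.$$ Let $m_0$ be the largest element of $\mathbb{Z}'$ not exceeding $\frac{n^2+c^2}{2c}$, and let $E_m^{\pm}$ denote the eigenspace associated with the $m$-th Fourier component corresponding to the root $\kappa_m^{\pm}$. Then: (i) the phase space of this linear system decomposes into the direct sum $E^s\oplus E^u\oplus E^{c^+}\oplus E^{c^-}$, where $E^s=\oplus_{m>m_0}E_m^+$, $E^u=\oplus_{m>m_0}E_m^-$, $E^{c^+}=\oplus_{m\le m_0}E_m^+$, $E^{c^-}=\oplus_{m\le m_0}E_m^-$ (with $m\in\mathbb{Z}'$); (ii) considering all roots $\kappa_m^\pm$, $m\in\mathbb{Z}'$, together, the zero root $\kappa=0$ is semi-simple of multiplicity two, the purely imaginary roots $\kappa\in i\mathbb{R}$ are semi-simple of multiplicity at most three,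 and all other roots $\kappa\in\mathbb{C}$ are simple.
   Context: This linear system is the linearization at zero, with $\epsilon=0$, of the Fourier-mode system obtained from traveling solutions $\psi(x,y)=\sqrt{\epsilon}\sum_{m\in\mathbb{Z}'}\psi_m(y)e^{imx/2}$, $y=x-ct$, of a Gross--Pitaevskii equation. *)

theory Defs
  imports "HOL-Analysis.Analysis"
begin

definition Zp :: "nat \<Rightarrow> int set" where
  "Zp n = {m. even m = even n}"

definition omega :: "nat \<Rightarrow> real" where
  "omega n = (real n)^2 / 4"

definition m0 :: "nat \<Rightarrow> real \<Rightarrow> int" where
  "m0 n c = (GREATEST m. m \<in> Zp n \<and> real_of_int m \<le> ((real n)^2 + c^2) / (2*c))"

definition kappa :: "nat \<Rightarrow> real \<Rightarrow> int \<Rightarrow> bool \<Rightarrow> complex" where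
  "kappa n c m s = (\<i> * complex_of_real (c - real_of_int m)
      + (if s then 1 else -1) * csqrt (complex_of_real (2*c*real_of_int m - (real n)^2 - c^2))) / 2"

text \<open>First-order form of the m-th ODE: (psi, psi') \<mapsto> (psi', psi'').\<close>
definition Amul :: "nat \<Rightarrow> real \<Rightarrow> int \<Rightarrow> complex \<times> complex \<Rightarrow> complex \<times> complex" where
  "Amul n c m w = (snd w,
      complex_of_real ((real_of_int m)^2 / 4 - omega n) * fst w
      - \<i> * complex_of_real (real_of_int m - c) * snd w)"

definition cscale :: "complex \<Rightarrow> complex \<times> complex \<Rightarrow> complex \<times> complex" where
  "cscale k w = (k * fst w, k * snd w)"

text \<open>Phase space: finitely supported families of (psi_m, psi_m') indexed by Z'.\<close>
definition phase :: "nat \<Rightarrow> (int \<Rightarrow> complex \<times> complex) set" where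
  "phase n = {v. finite {m. v m \<noteq> 0} \<and> (\<forall>m. m \<notin> Zp n \<longrightarrow> v m = 0)}"

definition Aop :: "nat \<Rightarrow> real \<Rightarrow> (int \<Rightarrow> complex \<times> complex) \<Rightarrow> (int \<Rightarrow> complex \<times> complex)" where
  "Aop n c v = (\<lambda>m. Amul n c m (v m))"

definition Eig :: "nat \<Rightarrow> real \<Rightarrow> int \<Rightarrow> bool \<Rightarrow> (int \<Rightarrow> complex \<times> complex) set" where
  "Eig n c m s = {v \<in> phase n. (\<forall>j. j \<noteq> m \<longrightarrow> v j = 0)
      \<and> Amul n c m (v m) = cscale (kappa n c m s) (v m)}"

definition Esum :: "nat \<Rightarrow> real \<Rightarrow> int set \<Rightarrow> bool \<Rightarrow> (int \<Rightarrow> complex \<times> complex) set" where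
  "Esum n c S s = {v. \<exists>F w. finite F \<and> F \<subseteq> S \<and> (\<forall>m\<in>F. w m \<in> Eig n c m s)
      \<and> v = (\<lambda>j. \<Sum>m\<in>F. w m j)}"

definition Es :: "nat \<Rightarrow> real \<Rightarrow> (int \<Rightarrow> complex \<times> complex) set" where
  "Es n c = Esum n c {m \<in> Zp n. m > m0 n c} True"
definition Eu :: "nat \<Rightarrow> real \<Rightarrow> (int \<Rightarrow> complex \<times> complex) set" where
  "Eu n c = Esum n c {m \<in> Zp n. m > m0 n c} False"
definition Ecp :: "nat \<Rightarrow> real \<Rightarrow> (int \<Rightarrow> complex \<times> complex) set" where
  "Ecp n c = Esum n c {m \<in> Zp n. m \<le> m0 n c} True"
definition Ecm :: "nat \<Rightarrow> real \<Rightarrow> (int \<Rightarrow> complex \<times> complex) set" where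
  "Ecm n c = Esum n c {m \<in> Zp n. m \<le> m0 n c} False"

text \<open>Multiplicity of k among all roots kappa_m^{+/-}, m in Z' (counted with the sign label).\<close>
definition root_set :: "nat \<Rightarrow> real \<Rightarrow> complex \<Rightarrow> (int \<times> bool) set" where
  "root_set n c k = {(m, s). m \<in> Zp n \<and> kappa n c m s = k}"

definition root_mult :: "nat \<Rightarrow> real \<Rightarrow> complex \<Rightarrow> nat" where
  "root_mult n c k = card (root_set n c k)"

text \<open>Semi-simple: the generalized eigenspace equals the eigenspace,
  i.e. ker (A - k)^2 = ker (A - k) on the phase space.\<close>
definition semisimple :: "nat \<Rightarrow> real \<Rightarrow> complex \<Rightarrow> bool" where
  "semisimple n c k = (\<forall>v \<in> phase n.
      let B = (\<lambda>u. \<lambda>m. Aop n c u m - cscale k (u m)) in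
      B (B v) = (\<lambda>m. 0) \<longrightarrow> B v = (\<lambda>m. 0))"

end

theory Submission
  imports Defs
begin

text \<open>Each Fourier block is the first-order form of a second-order ODE whose characteristic
  roots are \<open>\<kappa>\<^sub>m\<^sup>\<plusminus>\<close>, i.e. a companion matrix. The roots differ by
  \<open>\<surd>(2cm - n\<^sup>2 - c\<^sup>2)\<close>, which the non-resonance hypothesis keeps nonzero, so
  the two eigenlines split every block: this gives the direct sum and the semisimplicity of every
  eigenvalue. The discriminant is positive exactly for \<open>m > m\<^sub>0\<close>, where the roots have
  real parts of opposite signs; otherwise both are purely imaginary. For the multiplicities, a root
  \<open>\<kappa>\<close> with \<open>Re \<kappa> \<noteq> 0\<close> determines \<open>m = c - 2 Im \<kappa>\<close>, a root
  \<open>\<kappa> = it\<close> forces \<open>(m + 2t)\<^sup>2 = n\<^sup>2 + 4ct\<close> (two values of \<open>m\<close>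
  at most), and within a block the sign is fixed because the two roots differ. The value
  \<open>0\<close> is attained at \<open>m = n\<close> and \<open>m = -n\<close>.\<close>

definition companion :: "complex \<Rightarrow> complex \<Rightarrow> complex \<times> complex \<Rightarrow> complex \<times> complex" where
  "companion k1 k2 w = (snd w, - (k1 * k2) * fst w + (k1 + k2) * snd w)"

text \<open>The component of \<open>w\<close> on the \<open>k1\<close>-eigenline of \<open>companion k1 k2\<close>, taken along
  the \<open>k2\<close>-eigenline.\<close>
definition eigen_part :: "complex \<Rightarrow> complex \<Rightarrow> complex \<times> complex \<Rightarrow> complex \<times> complex" where
  "eigen_part k1 k2 w = (let a = (snd w - k2 * fst w) / (k1 - k2) in (a, k1 * a))"

lemma companion_eq_cscale_iff:
  assumes "k = k1 \<or> k = k2"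
  shows "companion k1 k2 w = cscale k w \<longleftrightarrow> snd w = k * fst w"
  using assms by (cases w) (auto simp: companion_def cscale_def algebra_simps)

lemma snd_eigen_part: "snd (eigen_part k1 k2 w) = k1 * fst (eigen_part k1 k2 w)"
  by (simp add: eigen_part_def Let_def)

lemma eigen_part_zero [simp]: "eigen_part k1 k2 0 = 0"
  by (simp add: eigen_part_def zero_prod_def)

lemma eigen_part_decomp:
  assumes "k1 \<noteq> k2"
  shows "eigen_part k1 k2 w + eigen_part k2 k1 w = w"
proof -
  have "k1 - k2 \<noteq> 0" and "k2 - k1 = - (k1 - k2)" using assms by simp_all
  then show ?thesis
    by (simp add: eigen_part_def prod_eq_iff divide_simps) (simp add: algebra_simps)
qed

lemma eigenvector_sum_eq_zero:
  fixes k1 k2 a b :: complex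
  assumes "k1 \<noteq> k2" "(a, k1 * a) + (b, k2 * b) = 0"
  shows "a = 0" "b = 0"
proof -
  have "a + b = 0" "k1 * a + k2 * b = 0" using assms(2) by (simp_all add: zero_prod_def)
  then have "(k1 - k2) * a = 0" "(k2 - k1) * b = 0"
    by (simp_all add: algebra_simps eq_neg_iff_add_eq_0[symmetric])
  then show "a = 0" "b = 0" using assms(1) by simp_all
qed

lemma eigenvector_decomp_unique:
  fixes A B A' B' :: "complex \<times> complex"
  assumes "k1 \<noteq> k2"
    and "snd A = k1 * fst A" "snd B = k2 * fst B" "snd A' = k1 * fst A'" "snd B' = k2 * fst B'"
    and "A + B = A' + B'"
  shows "A = A'" "B = B'"
proof -
  have "(fst A - fst A', k1 * (fst A - fst A')) + (fst B - fst B', k2 * (fst B - fst B')) = 0"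
    using assms(2-6) by (simp add: prod_eq_iff algebra_simps)
  from eigenvector_sum_eq_zero[OF assms(1) this] show "A = A'" "B = B'"
    using assms(2-5) by (simp_all add: prod_eq_iff)
qed

lemma companion_minus_cscale:
  "companion k1 k2 ((a, k1 * a) + (b, k2 * b)) - cscale k ((a, k1 * a) + (b, k2 * b))
     = ((k1 - k) * a, k1 * ((k1 - k) * a)) + ((k2 - k) * b, k2 * ((k2 - k) * b))"
  by (simp add: companion_def cscale_def algebra_simps)

lemma companion_semisimple:
  assumes "k1 \<noteq> k2"
    and "companion k1 k2 (companion k1 k2 w - cscale k w) - cscale k (companion k1 k2 w - cscale k w) = 0"
  shows "companion k1 k2 w - cscale k w = 0"
proof -
  define a where "a = fst (eigen_part k1 k2 w)"
  define b where "b = fst (eigen_part k2 k1 w)"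
  have w: "w = (a, k1 * a) + (b, k2 * b)"
    using eigen_part_decomp[OF assms(1), of w] snd_eigen_part[of k1 k2 w] snd_eigen_part[of k2 k1 w]
    unfolding a_def b_def by (metis prod.collapse)
  have "((k1 - k) * ((k1 - k) * a), k1 * ((k1 - k) * ((k1 - k) * a)))
      + ((k2 - k) * ((k2 - k) * b), k2 * ((k2 - k) * ((k2 - k) * b))) = 0"
    using assms(2) unfolding w companion_minus_cscale .
  from eigenvector_sum_eq_zero[OF assms(1) this]
  have a: "(k1 - k) * a = 0" and b: "(k2 - k) * b = 0" by simp_all
  show ?thesis unfolding w companion_minus_cscale a b by (simp add: zero_prod_def)
qed

lemma Amul_eq_companion: "Amul n c m = companion (kappa n c m True) (kappa n c m False)"
proof
  fix w
  define D where "D = complex_of_real (2*c*real_of_int m - (real n)^2 - c^2)"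
  define a where "a = \<i> * complex_of_real (c - real_of_int m)"
  have plus: "kappa n c m True = (a + csqrt D) / 2" and minus: "kappa n c m False = (a - csqrt D) / 2"
    by (simp_all add: kappa_def a_def D_def)
  have sum: "kappa n c m True + kappa n c m False = - \<i> * complex_of_real (real_of_int m - c)"
    unfolding plus minus a_def by (simp add: field_simps)
  have "kappa n c m True * kappa n c m False = (a^2 - D) / 4"
    using power2_csqrt[of D] unfolding plus minus by (simp add: field_simps power2_eq_square)
  also have "\<dots> = - complex_of_real ((real_of_int m)^2 / 4 - omega n)"
    unfolding a_def D_def omega_def by (simp add: field_simps power2_eq_square)
  finally show "Amul n c m w = companion (kappa n c m True) (kappa n c m False) w"
    using sum unfolding Amul_def companion_def by simp
qed

lemma Amul_eq_cscale_kappa_iff: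
  "Amul n c m w = cscale (kappa n c m s) w \<longleftrightarrow> snd w = kappa n c m s * fst w"
  unfolding Amul_eq_companion by (rule companion_eq_cscale_iff) (cases s; simp)

definition disc :: "nat \<Rightarrow> real \<Rightarrow> int \<Rightarrow> real" where
  "disc n c m = 2 * c * real_of_int m - (real n)^2 - c^2"

lemma kappa_disc_nonneg:
  assumes "disc n c m \<ge> 0"
  shows "Re (kappa n c m s) = (if s then sqrt (disc n c m) else - sqrt (disc n c m)) / 2"
    and "Im (kappa n c m s) = (c - real_of_int m) / 2"
  using assms by (simp_all add: kappa_def disc_def csqrt_of_real)

lemma kappa_disc_nonpos:
  assumes "disc n c m \<le> 0"
  shows "Re (kappa n c m s) = 0"
    and "Im (kappa n c m s)
           = (c - real_of_int m + (if s then sqrt (- disc n c m) else - sqrt (- disc n c m))) / 2"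
  using assms by (simp_all add: kappa_def disc_def)

lemma kappa_True_neq_False:
  assumes "disc n c m \<noteq> 0"
  shows "kappa n c m True \<noteq> kappa n c m False"
proof
  assume "kappa n c m True = kappa n c m False"
  then have "csqrt (complex_of_real (disc n c m)) = 0"
    unfolding kappa_def disc_def by (simp add: field_simps)
  with assms show False by simp
qed

lemma Re_kappa_neq_0_imp:
  assumes "Re (kappa n c m s) \<noteq> 0"
  shows "real_of_int m = c - 2 * Im (kappa n c m s)"
proof (cases "disc n c m \<ge> 0")
  case True
  then show ?thesis using kappa_disc_nonneg(2)[OF True, of s] by simp
next
  case False
  then show ?thesis using kappa_disc_nonpos(1)[of n c m s] assms by simp
qed

lemma Re_kappa_eq_0_imp:
  assumes "Re (kappa n c m s) = 0"
  shows "(real_of_int m + 2 * Im (kappa n c m s))^2 = (real n)^2 + 4 * c * Im (kappa n c m s)"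
proof (cases "disc n c m \<le> 0")
  case True
  define t where "t = Im (kappa n c m s)"
  have "2 * t - c + real_of_int m = (if s then sqrt (- disc n c m) else - sqrt (- disc n c m))"
    using kappa_disc_nonpos(2)[OF True, of s] unfolding t_def by simp
  then have "(2 * t - c + real_of_int m)^2 = - disc n c m"
    using True by (simp add: power_mult_distrib)
  then show ?thesis unfolding t_def[symmetric] disc_def by (simp add: power2_eq_square algebra_simps)
next
  case False
  then have "sqrt (disc n c m) > 0" by simp
  then show ?thesis using kappa_disc_nonneg(1)[of n c m s] False assms by (cases s) auto
qed

lemma le_m0_iff:
  assumes "m \<in> Zp n"
  shows "m \<le> m0 n c \<longleftrightarrow> real_of_int m \<le> ((real n)^2 + c^2) / (2*c)"
proof -
  define X where "X = ((real n)^2 + c^2) / (2*c)"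
  define g where "g = (if even \<lfloor>X\<rfloor> = even n then \<lfloor>X\<rfloor> else \<lfloor>X\<rfloor> - 1)"
  have g_le: "real_of_int g \<le> X"
    unfolding g_def using of_int_floor_le[of X] by (auto simp del: of_int_floor_le)
  have le_g: "j \<le> g" if "j \<in> Zp n" "real_of_int j \<le> X" for j
  proof -
    have "j \<le> \<lfloor>X\<rfloor>" using that(2) by (simp add: le_floor_iff)
    then show ?thesis using that(1) unfolding g_def Zp_def by (cases "j = \<lfloor>X\<rfloor>") auto
  qed
  have "g \<in> Zp n" unfolding g_def Zp_def by auto
  then have "m0 n c = g" unfolding m0_def X_def[symmetric]
    using g_le le_g by (intro Greatest_equality) auto
  then show ?thesis unfolding X_def[symmetric]
    using le_g[OF assms] g_le by (meson of_int_le_iff order_trans)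
qed

lemma le_m0_iff_disc_nonpos:
  assumes "c > 0" "m \<in> Zp n"
  shows "m \<le> m0 n c \<longleftrightarrow> disc n c m \<le> 0"
  using assms by (simp add: le_m0_iff disc_def pos_le_divide_eq algebra_simps)

lemma Re_kappa_above_m0:
  assumes "c > 0" "m \<in> Zp n" "m0 n c < m"
  shows "Re (kappa n c m True) > 0" and "Re (kappa n c m False) < 0"
proof -
  have disc_pos: "disc n c m > 0" using le_m0_iff_disc_nonpos[OF assms(1,2)] assms(3) by simp
  then have "Re (kappa n c m True) = sqrt (disc n c m) / 2"
    and "Re (kappa n c m False) = - sqrt (disc n c m) / 2"
    using kappa_disc_nonneg(1)[of n c m True] kappa_disc_nonneg(1)[of n c m False] by simp_all
  moreover have "sqrt (disc n c m) > 0" using disc_pos by simp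
  ultimately show "Re (kappa n c m True) > 0" "Re (kappa n c m False) < 0" by linarith+
qed

lemma Re_kappa_upto_m0:
  assumes "c > 0" "m \<in> Zp n" "m \<le> m0 n c"
  shows "Re (kappa n c m s) = 0"
  using assms kappa_disc_nonpos(1) le_m0_iff_disc_nonpos by blast

lemma zero_roots:
  fixes n :: nat and c :: real
  assumes "c \<ge> 0"
  shows "{(int n, c < real n), (- int n, False)} \<subseteq> root_set n c 0"
proof -
  have d1: "disc n c (int n) = - ((c - real n)^2)" and d2: "disc n c (- int n) = - ((c + real n)^2)"
    by (simp_all add: disc_def power2_eq_square algebra_simps)
  have sq1: "sqrt (- disc n c (int n)) = \<bar>c - real n\<bar>"
    and sq2: "sqrt (- disc n c (- int n)) = c + real n"
    using assms unfolding d1 d2 by simp_all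
  have "Im (kappa n c (int n) (c < real n)) = 0"
    using kappa_disc_nonpos(2)[of n c "int n" "c < real n"] d1 sq1 by (cases "c < real n") simp_all
  moreover have "Im (kappa n c (- int n) False) = 0"
    using kappa_disc_nonpos(2)[of n c "- int n" False] d2 sq2 by simp
  ultimately have "kappa n c (int n) (c < real n) = 0" "kappa n c (- int n) False = 0"
    using kappa_disc_nonpos(1) d1 d2 by (simp_all add: complex_eq_iff)
  then show ?thesis by (simp add: root_set_def Zp_def)
qed

lemma mem_EsumD:
  assumes "v \<in> Esum n c S s"
  shows "finite {m. v m \<noteq> 0}" and "\<And>j. j \<notin> S \<Longrightarrow> v j = 0"
    and "\<And>j. snd (v j) = kappa n c j s * fst (v j)"
proof -
  obtain F w where F: "finite F" "F \<subseteq> S" "\<forall>m\<in>F. w m \<in> Eig n c m s"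
    and v: "v = (\<lambda>j. \<Sum>m\<in>F. w m j)" using assms unfolding Esum_def by blast
  have vj: "v j = (if j \<in> F then w j j else 0)" for j
  proof -
    have "v j = (\<Sum>m\<in>F. if m = j then w j j else 0)"
      unfolding v using F(3) unfolding Eig_def by (intro sum.cong) auto
    also have "\<dots> = (if j \<in> F then w j j else 0)" using F(1) by (simp add: sum.delta)
    finally show ?thesis .
  qed
  have "{m. v m \<noteq> 0} \<subseteq> F" using vj by auto
  then show "finite {m. v m \<noteq> 0}" using F(1) finite_subset by blast
  show "v j = 0" if "j \<notin> S" for j using vj F(2) that by auto
  show "snd (v j) = kappa n c j s * fst (v j)" for j
    using F(3) vj[of j] by (cases "j \<in> F") (auto simp: Eig_def Amul_eq_cscale_kappa_iff)
qed

lemma mem_EsumI: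
  assumes "S \<subseteq> Zp n" "finite {m. v m \<noteq> 0}" "\<And>j. j \<notin> S \<Longrightarrow> v j = 0"
    and "\<And>j. snd (v j) = kappa n c j s * fst (v j)"
  shows "v \<in> Esum n c S s"
proof -
  define F where "F = {m. v m \<noteq> 0}"
  define w where "w m = (\<lambda>j. if j = m then v m else 0)" for m
  have "F \<subseteq> S" unfolding F_def using assms(3) by blast
  moreover have "w m \<in> Eig n c m s" if "m \<in> F" for m
  proof -
    have "m \<in> Zp n" using that \<open>F \<subseteq> S\<close> assms(1) by blast
    then have "\<forall>j. j \<notin> Zp n \<longrightarrow> w m j = 0" by (simp add: w_def)
    moreover have "finite {j. w m j \<noteq> 0}" by (rule finite_subset[of _ "{m}"]) (auto simp: w_def)
    ultimately have "w m \<in> phase n" unfolding phase_def by blast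
    then show ?thesis
      unfolding Eig_def using assms(4)[of m] by (simp add: w_def Amul_eq_cscale_kappa_iff)
  qed
  moreover have "v = (\<lambda>j. \<Sum>m\<in>F. w m j)"
  proof
    fix j
    have "(\<Sum>m\<in>F. w m j) = (if j \<in> F then v j else 0)"
      using assms(2) unfolding F_def w_def by (simp add: sum.delta')
    then show "v j = (\<Sum>m\<in>F. w m j)" unfolding F_def by auto
  qed
  moreover have "finite F" using assms(2) unfolding F_def .
  ultimately show ?thesis unfolding Esum_def by (intro CollectI exI[of _ F] exI[of _ w]) simp
qed

lemma Esum_subset_phase: "S \<subseteq> Zp n \<Longrightarrow> Esum n c S s \<subseteq> phase n"
  unfolding phase_def by (auto dest: mem_EsumD)

lemma restrict_mem_Esum:
  assumes "v \<in> phase n" "\<And>j. v j = 0 \<Longrightarrow> f j = 0"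
    and "\<And>j. snd (f j) = kappa n c j s * fst (f j)"
  shows "(\<lambda>j. if P j then f j else 0) \<in> Esum n c {m \<in> Zp n. P m} s"
proof (rule mem_EsumI)
  have "{j. (if P j then f j else 0) \<noteq> 0} \<subseteq> {j. v j \<noteq> 0}" using assms(2) by auto
  then show "finite {j. (if P j then f j else 0) \<noteq> 0}"
    by (rule finite_subset) (use assms(1) in \<open>simp add: phase_def\<close>)
qed (use assms in \<open>auto simp: phase_def zero_prod_def\<close>)

context
  fixes n :: nat and c :: real
  assumes c_pos: "c > 0"
    and nonresonant: "\<forall>m \<in> Zp n. real_of_int m \<noteq> ((real n)^2 + c^2) / (2*c)"
begin

lemma kappa_distinct: "m \<in> Zp n \<Longrightarrow> kappa n c m True \<noteq> kappa n c m False"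
proof (rule kappa_True_neq_False)
  assume "m \<in> Zp n"
  then have "real_of_int m \<noteq> ((real n)^2 + c^2) / (2*c)" using nonresonant by blast
  then show "disc n c m \<noteq> 0" using c_pos by (auto simp: disc_def field_simps)
qed

lemma phase_decomp:
  assumes "v \<in> phase n"
  shows "\<exists>a b d e. a \<in> Es n c \<and> b \<in> Eu n c \<and> d \<in> Ecp n c \<and> e \<in> Ecm n c
            \<and> v = (\<lambda>j. a j + b j + d j + e j)"
proof -
  define P where "P j = eigen_part (kappa n c j True) (kappa n c j False) (v j)" for j
  define Q where "Q j = eigen_part (kappa n c j False) (kappa n c j True) (v j)" for j
  have v_eq: "v j = P j + Q j" for j
  proof (cases "j \<in> Zp n")
    case True
    then show ?thesis unfolding P_def Q_def using eigen_part_decomp[OF kappa_distinct] by simp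
  next
    case False
    then show ?thesis using assms by (simp add: phase_def P_def Q_def)
  qed
  have "(\<lambda>j. if m0 n c < j then P j else 0) \<in> Es n c"
    unfolding Es_def by (rule restrict_mem_Esum[OF assms]) (simp_all add: P_def snd_eigen_part)
  moreover have "(\<lambda>j. if m0 n c < j then Q j else 0) \<in> Eu n c"
    unfolding Eu_def by (rule restrict_mem_Esum[OF assms]) (simp_all add: Q_def snd_eigen_part)
  moreover have "(\<lambda>j. if j \<le> m0 n c then P j else 0) \<in> Ecp n c"
    unfolding Ecp_def by (rule restrict_mem_Esum[OF assms]) (simp_all add: P_def snd_eigen_part)
  moreover have "(\<lambda>j. if j \<le> m0 n c then Q j else 0) \<in> Ecm n c"
    unfolding Ecm_def by (rule restrict_mem_Esum[OF assms]) (simp_all add: Q_def snd_eigen_part)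
  moreover have "v = (\<lambda>j. (if m0 n c < j then P j else 0) + (if m0 n c < j then Q j else 0)
                          + (if j \<le> m0 n c then P j else 0) + (if j \<le> m0 n c then Q j else 0))"
    by (auto simp: v_eq)
  ultimately show ?thesis by blast
qed

lemma phase_decomp_unique:
  assumes "a \<in> Es n c" "b \<in> Eu n c" "d \<in> Ecp n c" "e \<in> Ecm n c"
    and "a' \<in> Es n c" "b' \<in> Eu n c" "d' \<in> Ecp n c" "e' \<in> Ecm n c"
    and sum_eq: "(\<lambda>j. a j + b j + d j + e j) = (\<lambda>j. a' j + b' j + d' j + e' j)"
  shows "a = a' \<and> b = b' \<and> d = d' \<and> e = e'"
proof -
  note mem = assms(1-8)[unfolded Es_def Eu_def Ecp_def Ecm_def]
  note vanish = mem[THEN mem_EsumD(2)] and eigen = mem[THEN mem_EsumD(3)]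
  have "a j = a' j \<and> b j = b' j \<and> d j = d' j \<and> e j = e' j" for j
  proof (cases "j \<in> Zp n")
    case False
    then show ?thesis using vanish[of j] by simp
  next
    case True
    have j_sum: "a j + b j + d j + e j = a' j + b' j + d' j + e' j"
      using fun_cong[OF sum_eq] by simp
    note unique = eigenvector_decomp_unique[OF kappa_distinct[OF True]]
    show ?thesis
    proof (cases "m0 n c < j")
      case True
      then have "d j = 0" "e j = 0" "d' j = 0" "e' j = 0"
        using vanish(3,4,7,8)[of j] by auto
      with j_sum have "a j + b j = a' j + b' j" by simp
      with unique[OF eigen(1,2,5,6)] \<open>d j = 0\<close> \<open>e j = 0\<close> \<open>d' j = 0\<close> \<open>e' j = 0\<close>
      show ?thesis by simp
    next
      case False
      then have "a j = 0" "b j = 0" "a' j = 0" "b' j = 0"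
        using vanish(1,2,5,6)[of j] by auto
      with j_sum have "d j + e j = d' j + e' j" by simp
      with unique[OF eigen(3,4,7,8)] \<open>a j = 0\<close> \<open>b j = 0\<close> \<open>a' j = 0\<close> \<open>b' j = 0\<close>
      show ?thesis by simp
    qed
  qed
  then show ?thesis by (simp add: fun_eq_iff)
qed

lemma semisimple_all: "semisimple n c k"
proof -
  have block: "Amul n c j w - cscale k w = 0"
    if "Amul n c j (Amul n c j w - cscale k w) - cscale k (Amul n c j w - cscale k w) = 0"
      and "j \<in> Zp n \<or> w = 0" for j w
  proof (cases "j \<in> Zp n")
    case True
    from companion_semisimple[OF kappa_distinct[OF True] that(1)[unfolded Amul_eq_companion]]
    show ?thesis unfolding Amul_eq_companion .
  next
    case False
    then show ?thesis using that(2) by (simp add: Amul_def cscale_def zero_prod_def)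
  qed
  show ?thesis unfolding semisimple_def Let_def Aop_def fun_eq_iff
  proof (intro ballI impI allI)
    fix v j
    assume "v \<in> phase n"
      and "\<forall>m. Amul n c m (Amul n c m (v m) - cscale k (v m))
                 - cscale k (Amul n c m (v m) - cscale k (v m)) = 0"
    then show "Amul n c j (v j) - cscale k (v j) = 0"
      using block[of j "v j"] unfolding phase_def by blast
  qed
qed

lemma inj_on_fst_root_set: "inj_on fst (root_set n c k)"
proof (rule inj_onI)
  fix x y assume "x \<in> root_set n c k" "y \<in> root_set n c k" "fst x = fst y"
  then obtain m s s' where "x = (m, s)" "y = (m, s')" "m \<in> Zp n" "kappa n c m s = kappa n c m s'"
    unfolding root_set_def by auto
  moreover have "kappa n c m True \<noteq> kappa n c m False" "kappa n c m False \<noteq> kappa n c m True"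
    using kappa_distinct[OF \<open>m \<in> Zp n\<close>] by auto
  ultimately show "x = y" by (cases s; cases s') auto
qed

lemma root_set_bound:
  assumes "finite B" and "\<And>m s. (m, s) \<in> root_set n c k \<Longrightarrow> real_of_int m \<in> B"
  shows "finite (root_set n c k)" and "root_mult n c k \<le> card B"
proof -
  define M where "M = {m. real_of_int m \<in> B}"
  have inj: "inj_on real_of_int M" by (simp add: inj_on_def)
  have img: "real_of_int ` M \<subseteq> B" unfolding M_def by auto
  have "finite M" using finite_imageD[OF finite_subset[OF img assms(1)] inj] .
  have sub: "fst ` root_set n c k \<subseteq> M" unfolding M_def using assms(2) by auto
  show "finite (root_set n c k)"
    using finite_imageD[OF finite_subset[OF sub \<open>finite M\<close>] inj_on_fst_root_set] .
  have "root_mult n c k = card (fst ` root_set n c k)"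
    unfolding root_mult_def using card_image[OF inj_on_fst_root_set] by simp
  also have "\<dots> \<le> card M" using card_mono[OF \<open>finite M\<close> sub] .
  also have "\<dots> \<le> card B" using card_inj_on_le[OF inj img assms(1)] .
  finally show "root_mult n c k \<le> card B" .
qed

lemma root_mult_Re_neq_0:
  assumes "Re k \<noteq> 0"
  shows "finite (root_set n c k)" and "root_mult n c k \<le> 1"
proof -
  have mem: "real_of_int m \<in> {c - 2 * Im k}" if "(m, s) \<in> root_set n c k" for m s
    using that Re_kappa_neq_0_imp assms unfolding root_set_def by auto
  show "finite (root_set n c k)" "root_mult n c k \<le> 1"
    using root_set_bound[of "{c - 2 * Im k}" k] mem by auto
qed

lemma root_mult_Re_eq_0:
  assumes "Re k = 0"
  shows "finite (root_set n c k)" and "root_mult n c k \<le> 2"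
proof -
  define R where "R = (real n)^2 + 4 * c * Im k"
  have mem: "real_of_int m \<in> {sqrt R - 2 * Im k, - sqrt R - 2 * Im k}"
    if "(m, s) \<in> root_set n c k" for m s
  proof -
    have "(real_of_int m + 2 * Im k)^2 = R"
      using that Re_kappa_eq_0_imp assms unfolding root_set_def R_def by auto
    then have "\<bar>real_of_int m + 2 * Im k\<bar> = sqrt R" by (metis real_sqrt_abs)
    then show ?thesis by (auto simp: abs_if split: if_splits)
  qed
  have "card {sqrt R - 2 * Im k, - sqrt R - 2 * Im k} \<le> 2" by (simp add: card_insert_if)
  moreover have "finite {sqrt R - 2 * Im k, - sqrt R - 2 * Im k}" by simp
  ultimately show "finite (root_set n c k)" "root_mult n c k \<le> 2"
    using root_set_bound[of "{sqrt R - 2 * Im k, - sqrt R - 2 * Im k}" k] mem by auto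
qed

lemma finite_root_set: "finite (root_set n c k)"
  using root_mult_Re_neq_0(1) root_mult_Re_eq_0(1) by blast

lemma root_mult_zero:
  assumes "n \<ge> 1"
  shows "root_mult n c 0 = 2"
proof -
  have "card {(int n, c < real n), (- int n, False)} \<le> root_mult n c 0"
    unfolding root_mult_def using c_pos by (intro card_mono[OF finite_root_set zero_roots]) simp
  moreover have "card {(int n, c < real n), (- int n, False)} = 2" using assms by simp
  moreover have "root_mult n c 0 \<le> 2" using root_mult_Re_eq_0(2)[of 0] by simp
  ultimately show ?thesis by linarith
qed

end

theorem lemma1:
  fixes n :: nat and c :: real
  assumes "n \<ge> 1" and "c > 0"
    and "\<forall>m \<in> Zp n. real_of_int m \<noteq> ((real n)^2 + c^2) / (2*c)"
  shows
    "(Es n c \<subseteq> phase n \<and> Eu n c \<subseteq> phase n \<and> Ecp n c \<subseteq> phase n \<and> Ecm n c \<subseteq> phase n)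
     \<and> (\<forall>v \<in> phase n. \<exists>a b d e. a \<in> Es n c \<and> b \<in> Eu n c \<and> d \<in> Ecp n c \<and> e \<in> Ecm n c
            \<and> v = (\<lambda>j. a j + b j + d j + e j))
     \<and> (\<forall>a b d e a' b' d' e'. a \<in> Es n c \<and> b \<in> Eu n c \<and> d \<in> Ecp n c \<and> e \<in> Ecm n c
            \<and> a' \<in> Es n c \<and> b' \<in> Eu n c \<and> d' \<in> Ecp n c \<and> e' \<in> Ecm n c
            \<and> (\<lambda>j. a j + b j + d j + e j) = (\<lambda>j. a' j + b' j + d' j + e' j)
            \<longrightarrow> a = a' \<and> b = b' \<and> d = d' \<and> e = e')
     \<and> (\<forall>m \<in> Zp n. m > m0 n c \<longrightarrow> Re (kappa n c m True) > 0 \<and> Re (kappa n c m False) < 0)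
     \<and> (\<forall>m \<in> Zp n. m \<le> m0 n c \<longrightarrow> Re (kappa n c m True) = 0 \<and> Re (kappa n c m False) = 0)
     \<and> (\<forall>k. finite (root_set n c k))
     \<and> (root_mult n c 0 = 2 \<and> semisimple n c 0)
     \<and> (\<forall>t::real. root_mult n c (\<i> * complex_of_real t) \<le> 3 \<and> semisimple n c (\<i> * complex_of_real t))
     \<and> (\<forall>k. Re k \<noteq> 0 \<longrightarrow> root_mult n c k \<le> 1)"
  using assms(2,3)
  apply (intro conjI)
  subgoal unfolding Es_def by (rule Esum_subset_phase) blast
  subgoal unfolding Eu_def by (rule Esum_subset_phase) blast
  subgoal unfolding Ecp_def by (rule Esum_subset_phase) blast
  subgoal unfolding Ecm_def by (rule Esum_subset_phase) blast
  subgoal using phase_decomp by blast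
  subgoal using phase_decomp_unique by blast
  subgoal using Re_kappa_above_m0 by blast
  subgoal using Re_kappa_upto_m0 by blast
  subgoal using finite_root_set by blast
  subgoal using root_mult_zero assms(1) by blast
  subgoal using semisimple_all by blast
  subgoal by (auto intro!: le_trans[OF root_mult_Re_eq_0(2)] semisimple_all)
  subgoal using root_mult_Re_neq_0(2) by blast
  done

end
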